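(* Let $[a,b]$ be an interval of length $\ell=b-a+1$ on which the offline optimal takes the form of Structure 1 or Structure 2, and assume $\bar y_{a\to b}:=\frac1\ell\sum_{j=a}^b y_j\in[-B,B]$. Then the predictions $x_j$ of FLH-OGD satisfy $$\sum_{j=a}^b (y_j-x_j)^2-(y_j-u_j)^2\le 10(B+G)^2\log n-\frac{4\lambda^2}{\ell}.$$
   Context: Squared loss game: $n\ge 3$, $B\ge 1$, $G\ge B$; for $t=1,\dots,n$ the learner predicts $x_t\in[-B,B]$, then the adversary reveals $y_t\in[-G,G]$. $[a,b]=\{a,\dots,b\}$. FLH-OGD: For each $j\in[n]$ a base learner $E^j$ is started at time $j$; it runs projected online gradient descent on $[-B,B]$ on the losses $x\mapsto (y_t-x)^2$, $t\ge j$: its first prediction $x^{(j)}_j$ is a fixed point of $[-B,B]$, and $x^{(j)}_{t+1}=\Pi\big(x^{(j)}_t-\tfrac{1}{2\tau}\cdot 2(x^{(j)}_t-y_t)\big)$ with $\tau=t-j+1$, $\Pi$ the projection onto $[-B,B]$. The FLH meta-algorithm with learning rate $\zeta$ keeps a probability vector $v_t=(v_t^{(1)},\dots,v_t^{(t)})$, $v_1=(1)$; it predicts $x_t=\sum_{j\le t}v_t^{(j)}x^{(j)}_t$; after $y_t$ is revealed it sets $\hat v^{(i)}_{t+1}=v_t^{(i)}e^{-\zeta(y_t-x_t^{(i)})^2}/\sum_{j\le t}v_t^{(j)}e^{-\zeta(y_t-x_t^{(j)})^2}$ for $i\le t$, then $v^{(t+1)}_{t+1}=1/(t+1)$ and $v^{(i)}_{t+1}=(1-\tfrac1{t+1})\hat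 v^{(i)}_{t+1}$. FLH-OGD uses $\zeta=1/(2(G+B)^2)$. Offline optimal: given $C_n>0$, $u_1,\dots,u_n$ is an optimal solution of: minimize $\frac12\sum_{t=1}^n(y_t-\tilde u_t)^2$ subject to $\sum_{t=2}^{n}|\tilde u_t-\tilde u_{t-1}|\le C_n$ and $-B\le\tilde u_t\le B$; with optimal dual variables $\lambda\ge0$ (TV constraint) and $\gamma^\pm_t\ge0$ (box constraints) satisfying the KKT conditions: there are $s_t\in[-1,1]$ with $s_t=\mathrm{sign}(u_{t+1}-u_t)$ whenever $u_{t+1}\ne u_t$, $s_0=s_n=0$, $u_t-y_t=\lambda(s_t-s_{t-1})+\gamma_t^--\gamma_t^+$, and $\lambda(\sum_{t=2}^n|u_t-u_{t-1}|-C_n)=0$, $\gamma_t^-(u_t+B)=0$, $\gamma_t^+(u_t-B)=0$. Structure 1 on $[a,b]\subseteq\{2,\dots,n-1\}$: $u_j=u_a\in(-B,B)$ for all $j\in[a,b]$, $u_b>u_{b+1}$ and $u_a>u_{a-1}$. Structure 2 on $[a,b]\subseteq\{2,\dots,n-1\}$: $u_j=u_a\in(-B,B)$ for all $j\in[a,b]$, $u_b<u_{b+1}$ and $u_a<u_{a-1}$. *)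

theory Defs
  imports Complex_Main
begin

definition proj_box :: "real \<Rightarrow> real \<Rightarrow> real" where
  "proj_box B x = max (- B) (min B x)"

text \<open>Base learner E^j (projected OGD on [-B,B], start point c):
  ogd_pred B c y j k is its prediction x^{(j)}_{j+k} at time t = j + k.\<close>
fun ogd_pred :: "real \<Rightarrow> real \<Rightarrow> (nat \<Rightarrow> real) \<Rightarrow> nat \<Rightarrow> nat \<Rightarrow> real" where
  "ogd_pred B c y j 0 = c"
| "ogd_pred B c y j (Suc k) =
     (let p = ogd_pred B c y j k
      in proj_box B (p - (1 / (2 * real (Suc k))) * (2 * (p - y (j + k)))))"

text \<open>Prediction of base learner E^j at time t (meaningful for t \<ge> j).\<close>
definition base_pred :: "real \<Rightarrow> real \<Rightarrow> (nat \<Rightarrow> real) \<Rightarrow> nat \<Rightarrow> nat \<Rightarrow> real" where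
  "base_pred B c y j t = ogd_pred B c y j (t - j)"

text \<open>FLH weights: flh_weights zeta E y t i = v_t^{(i)}, for t \<ge> 1 and 1 \<le> i \<le> t
  (zero otherwise); E j t is the prediction of base learner j at time t.\<close>
fun flh_weights :: "real \<Rightarrow> (nat \<Rightarrow> nat \<Rightarrow> real) \<Rightarrow> (nat \<Rightarrow> real) \<Rightarrow> nat \<Rightarrow> nat \<Rightarrow> real" where
  "flh_weights \<zeta> E y 0 = (\<lambda>i. 0)"
| "flh_weights \<zeta> E y (Suc 0) = (\<lambda>i. if i = 1 then 1 else 0)"
| "flh_weights \<zeta> E y (Suc (Suc t)) =
     (let v = flh_weights \<zeta> E y (Suc t);
          tt = Suc t;
          Z = (\<Sum>j = 1..tt. v j * exp (- \<zeta> * (y tt - E j tt)\<^sup>2))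
      in (\<lambda>i. if i = Suc tt then 1 / real (Suc tt)
              else if 1 \<le> i \<and> i \<le> tt
                then (1 - 1 / real (Suc tt)) * (v i * exp (- \<zeta> * (y tt - E i tt)\<^sup>2) / Z)
              else 0))"

definition flh_ogd_pred :: "real \<Rightarrow> real \<Rightarrow> real \<Rightarrow> (nat \<Rightarrow> real) \<Rightarrow> nat \<Rightarrow> real" where
  "flh_ogd_pred B G c y t =
     (let \<zeta> = 1 / (2 * (G + B)\<^sup>2);
          E = base_pred B c y
      in (\<Sum>j = 1..t. flh_weights \<zeta> E y t j * E j t))"

definition tv_feasible :: "nat \<Rightarrow> real \<Rightarrow> real \<Rightarrow> (nat \<Rightarrow> real) \<Rightarrow> bool" where
  "tv_feasible n B C w \<longleftrightarrow>
     (\<Sum>t = 2..n. \<bar>w t - w (t - 1)\<bar>) \<le> C \<and> (\<forall>t \<in> {1..n}. - B \<le> w t \<and> w t \<le> B)"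

definition offline_obj :: "nat \<Rightarrow> (nat \<Rightarrow> real) \<Rightarrow> (nat \<Rightarrow> real) \<Rightarrow> real" where
  "offline_obj n y w = (1/2) * (\<Sum>t = 1..n. (y t - w t)\<^sup>2)"

definition offline_optimal :: "nat \<Rightarrow> real \<Rightarrow> real \<Rightarrow> (nat \<Rightarrow> real) \<Rightarrow> (nat \<Rightarrow> real) \<Rightarrow> bool" where
  "offline_optimal n B C y u \<longleftrightarrow>
     tv_feasible n B C u \<and> (\<forall>w. tv_feasible n B C w \<longrightarrow> offline_obj n y u \<le> offline_obj n y w)"

definition kkt :: "nat \<Rightarrow> real \<Rightarrow> real \<Rightarrow> (nat \<Rightarrow> real) \<Rightarrow> (nat \<Rightarrow> real) \<Rightarrow> real
                   \<Rightarrow> (nat \<Rightarrow> real) \<Rightarrow> (nat \<Rightarrow> real) \<Rightarrow> (nat \<Rightarrow> real) \<Rightarrow> bool" where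
  "kkt n B C y u lam gm gp s \<longleftrightarrow>
     lam \<ge> 0 \<and>
     (\<forall>t \<in> {1..n}. gm t \<ge> 0 \<and> gp t \<ge> 0) \<and>
     (\<forall>t \<in> {0..n}. - 1 \<le> s t \<and> s t \<le> 1) \<and>
     (\<forall>t \<in> {1..<n}. u (t + 1) \<noteq> u t \<longrightarrow> s t = sgn (u (t + 1) - u t)) \<and>
     s 0 = 0 \<and> s n = 0 \<and>
     (\<forall>t \<in> {1..n}. u t - y t = lam * (s t - s (t - 1)) + gm t - gp t) \<and>
     lam * ((\<Sum>t = 2..n. \<bar>u t - u (t - 1)\<bar>) - C) = 0 \<and>
     (\<forall>t \<in> {1..n}. gm t * (u t + B) = 0 \<and> gp t * (u t - B) = 0)"

definition structure1 :: "nat \<Rightarrow> real \<Rightarrow> (nat \<Rightarrow> real) \<Rightarrow> nat \<Rightarrow> nat \<Rightarrow> bool" where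
  "structure1 n B u a b \<longleftrightarrow> 2 \<le> a \<and> a \<le> b \<and> b \<le> n - 1 \<and>
     (\<forall>j \<in> {a..b}. u j = u a) \<and> - B < u a \<and> u a < B \<and>
     u b > u (b + 1) \<and> u a > u (a - 1)"

definition structure2 :: "nat \<Rightarrow> real \<Rightarrow> (nat \<Rightarrow> real) \<Rightarrow> nat \<Rightarrow> nat \<Rightarrow> bool" where
  "structure2 n B u a b \<longleftrightarrow> 2 \<le> a \<and> a \<le> b \<and> b \<le> n - 1 \<and>
     (\<forall>j \<in> {a..b}. u j = u a) \<and> - B < u a \<and> u a < B \<and>
     u b < u (b + 1) \<and> u a < u (a - 1)"

end

theory Submission
  imports Defs "HOL-Analysis.Analysis"
begin

text \<open>On [a,b] the comparator u is constant and strictly inside the box, so the box multipliers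
  vanish there and the KKT stationarity condition telescopes to
  \<open>\<Sum>j\<in>[a,b]. u j - y j = \<lambda> (s b - s (a-1)) = \<plusminus>2\<lambda>\<close>. By the bias-variance identity, u therefore
  loses exactly \<open>4\<lambda>\<^sup>2/\<ell>\<close> more than the best constant, the mean of y on [a,b], which lies in the box
  by assumption. The base learner started at a is OGD with step \<open>1/(2\<tau>)\<close>, whose regret against
  any fixed point of the box is at most \<open>(G+B)\<^sup>2 (1 + ln \<ell>)\<close>; and since
  \<open>x \<mapsto> exp (-\<zeta>(y-x)\<^sup>2)\<close> is concave on the box for \<open>\<zeta> = 1/(2(G+B)\<^sup>2)\<close>, the FLH weight of that
  learner stays above \<open>exp(\<zeta> \<cdot> regret)/n\<close>, so FLH loses at most \<open>2(G+B)\<^sup>2 ln n\<close> against it.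
  Only the KKT conditions of the offline problem enter.\<close>

subsection \<open>Exp-concavity of the squared loss\<close>

lemma convex_on_neg_exp_sq_loss:
  fixes \<zeta> y :: real and S :: "real set"
  assumes "convex S" and "\<zeta> \<ge> 0" and small: "\<And>x. x \<in> S \<Longrightarrow> 2 * \<zeta> * (y - x)\<^sup>2 \<le> 1"
  shows "convex_on S (\<lambda>x. - exp (- \<zeta> * (y - x)\<^sup>2))"
proof (rule f''_ge0_imp_convex[OF \<open>convex S\<close>,
      where f' = "\<lambda>x. - exp (- \<zeta> * (y - x)\<^sup>2) * (2 * \<zeta> * (y - x))"
        and f'' = "\<lambda>x. exp (- \<zeta> * (y - x)\<^sup>2) * (2 * \<zeta> - 4 * \<zeta>\<^sup>2 * (y - x)\<^sup>2)"])
  fix x assume "x \<in> S"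
  show "((\<lambda>x. - exp (- \<zeta> * (y - x)\<^sup>2)) has_real_derivative
          - exp (- \<zeta> * (y - x)\<^sup>2) * (2 * \<zeta> * (y - x))) (at x)"
    by (auto intro!: derivative_eq_intros simp: algebra_simps power2_eq_square)
  show "((\<lambda>x. - exp (- \<zeta> * (y - x)\<^sup>2) * (2 * \<zeta> * (y - x))) has_real_derivative
          exp (- \<zeta> * (y - x)\<^sup>2) * (2 * \<zeta> - 4 * \<zeta>\<^sup>2 * (y - x)\<^sup>2)) (at x)"
    by (auto intro!: derivative_eq_intros simp: algebra_simps power2_eq_square)
  have "2 * \<zeta> * (2 * \<zeta> * (y - x)\<^sup>2) \<le> 2 * \<zeta>"
    using mult_left_mono[OF small[OF \<open>x \<in> S\<close>], of "2 * \<zeta>"] \<open>\<zeta> \<ge> 0\<close> by simp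
  then have "4 * \<zeta>\<^sup>2 * (y - x)\<^sup>2 \<le> 2 * \<zeta>"
    by (simp add: power2_eq_square algebra_simps)
  then show "0 \<le> exp (- \<zeta> * (y - x)\<^sup>2) * (2 * \<zeta> - 4 * \<zeta>\<^sup>2 * (y - x)\<^sup>2)"
    by simp
qed

lemma sum_exp_sq_loss_le_exp_sq_loss_mix:
  fixes \<zeta> y :: real and S :: "real set" and I :: "'i set" and v x :: "'i \<Rightarrow> real"
  assumes "convex S" and "\<zeta> \<ge> 0" and "\<And>x. x \<in> S \<Longrightarrow> 2 * \<zeta> * (y - x)\<^sup>2 \<le> 1"
    and "finite I" and "I \<noteq> {}" and "\<And>i. i \<in> I \<Longrightarrow> v i \<ge> 0" and "sum v I = 1"
    and "\<And>i. i \<in> I \<Longrightarrow> x i \<in> S"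
  shows "(\<Sum>i\<in>I. v i * exp (- \<zeta> * (y - x i)\<^sup>2)) \<le> exp (- \<zeta> * (y - (\<Sum>i\<in>I. v i * x i))\<^sup>2)"
  using convex_on_sum[OF assms(4,5) convex_on_neg_exp_sq_loss[OF assms(1-3)] assms(7,6,8)]
  by (simp add: sum_negf)

subsection \<open>Projected online gradient descent\<close>

lemma proj_box_dist_le:
  assumes "- B \<le> u" "u \<le> B"
  shows "(proj_box B z - u)\<^sup>2 \<le> (z - u)\<^sup>2"
proof -
  have "\<bar>proj_box B z - u\<bar> \<le> \<bar>z - u\<bar>"
    using assms unfolding proj_box_def by auto
  then show ?thesis
    by (simp add: abs_le_square_iff)
qed

lemma ogd_pred_range:
  assumes "- B \<le> c" "c \<le> B"
  shows "- B \<le> ogd_pred B c y j k \<and> ogd_pred B c y j k \<le> B"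
  using assms by (cases k) (auto simp: Let_def proj_box_def)

text \<open>The step size \<open>1/\<tau>\<close> makes the potential \<open>\<tau> (p - u)\<^sup>2\<close> telescope.\<close>

lemma ogd_step_regret:
  fixes p yv u :: real and k :: nat
  assumes "- B \<le> u" "u \<le> B"
  defines "p' \<equiv> proj_box B (p - (1 / (2 * real (Suc k))) * (2 * (p - yv)))"
  shows "(yv - p)\<^sup>2 - (yv - u)\<^sup>2
           \<le> real k * (p - u)\<^sup>2 - real (Suc k) * (p' - u)\<^sup>2 + (p - yv)\<^sup>2 / real (Suc k)"
proof -
  define \<tau> where "\<tau> = real (Suc k)"
  define z where "z = p - (p - yv) / \<tau>"
  have "\<tau> > 0" unfolding \<tau>_def by simp
  have "(1 / (2 * real (Suc k))) * (2 * (p - yv)) = (p - yv) / \<tau>"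
    unfolding \<tau>_def by (simp add: field_simps)
  then have "p' = proj_box B z"
    unfolding p'_def z_def by simp
  then have "\<tau> * (p' - u)\<^sup>2 \<le> \<tau> * (z - u)\<^sup>2"
    using proj_box_dist_le[OF assms(1,2)] \<open>\<tau> > 0\<close> by simp
  moreover have "\<tau> * (z - u)\<^sup>2 = \<tau> * (p - u)\<^sup>2 - 2 * (p - u) * (p - yv) + (p - yv)\<^sup>2 / \<tau>"
    unfolding z_def using \<open>\<tau> > 0\<close> by (simp add: field_simps power2_eq_square)
  moreover have k: "real k = \<tau> - 1"
    unfolding \<tau>_def by simp
  ultimately show ?thesis
    unfolding k \<tau>_def[symmetric] by (simp add: algebra_simps power2_eq_square)
qed

lemma ogd_regret:
  assumes "- B \<le> u" "u \<le> B"
  shows "(\<Sum>k<L. (y (j + k) - ogd_pred B c y j k)\<^sup>2 - (y (j + k) - u)\<^sup>2)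
           + real L * (ogd_pred B c y j L - u)\<^sup>2
         \<le> (\<Sum>k<L. (ogd_pred B c y j k - y (j + k))\<^sup>2 / real (Suc k))"
proof (induction L)
  case (Suc L)
  have "(y (j + L) - ogd_pred B c y j L)\<^sup>2 - (y (j + L) - u)\<^sup>2
        \<le> real L * (ogd_pred B c y j L - u)\<^sup>2 - real (Suc L) * (ogd_pred B c y j (Suc L) - u)\<^sup>2
          + (ogd_pred B c y j L - y (j + L))\<^sup>2 / real (Suc L)"
    using ogd_step_regret[OF assms, where p = "ogd_pred B c y j L" and yv = "y (j + L)" and k = L] by (simp add: Let_def)
  with Suc.IH show ?case by simp
qed simp

lemma harm_le_one_plus_ln: "n \<ge> 1 \<Longrightarrow> harm n \<le> 1 + ln (real n)"
  using euler_mascheroni_sequence_decreasing[of 1 n] by (simp add: harm_expand)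

lemma base_pred_regret:
  assumes "- B \<le> c" "c \<le> B" "- B \<le> u" "u \<le> B" "j \<le> T"
    and y_bounded: "\<And>t. t \<in> {j..T} \<Longrightarrow> \<bar>y t\<bar> \<le> G"
  shows "(\<Sum>t = j..T. (y t - base_pred B c y j t)\<^sup>2 - (y t - u)\<^sup>2)
           \<le> (G + B)\<^sup>2 * (1 + ln (real (T - j + 1)))"
proof -
  define L where "L = T - j + 1"
  have interval: "{j..T} = (\<lambda>k. j + k) ` {..<L}"
    unfolding L_def using \<open>j \<le> T\<close> image_add_atLeastLessThan[of j 0 L]
    by (auto simp: lessThan_atLeast0 L_def)
  have "(\<Sum>t = j..T. (y t - base_pred B c y j t)\<^sup>2 - (y t - u)\<^sup>2)
        = (\<Sum>k<L. (y (j + k) - ogd_pred B c y j k)\<^sup>2 - (y (j + k) - u)\<^sup>2)"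
    unfolding interval by (simp add: sum.reindex base_pred_def)
  also have "\<dots> \<le> (\<Sum>k<L. (ogd_pred B c y j k - y (j + k))\<^sup>2 / real (Suc k))"
    using ogd_regret[OF assms(3,4), where L = L and y = y and j = j and c = c]
      mult_nonneg_nonneg[OF of_nat_0_le_iff zero_le_power2, of L "ogd_pred B c y j L - u"]
    by linarith
  also have "\<dots> \<le> (\<Sum>k<L. (G + B)\<^sup>2 * inverse (real (Suc k)))"
  proof (rule sum_mono)
    fix k assume "k \<in> {..<L}"
    then have "\<bar>y (j + k)\<bar> \<le> G"
      using y_bounded interval by blast
    then have "\<bar>ogd_pred B c y j k - y (j + k)\<bar> \<le> G + B"
      using ogd_pred_range[OF assms(1,2), of y j k] by linarith
    then have "(ogd_pred B c y j k - y (j + k))\<^sup>2 \<le> (G + B)\<^sup>2"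
      by (intro power2_le_iff_abs_le[THEN iffD2]) auto
    then show "(ogd_pred B c y j k - y (j + k))\<^sup>2 / real (Suc k) \<le> (G + B)\<^sup>2 * inverse (real (Suc k))"
      using mult_right_mono[of _ _ "inverse (real (Suc k))"] by (simp add: divide_inverse)
  qed
  also have "\<dots> = (G + B)\<^sup>2 * harm L"
    by (simp add: harm_altdef sum_distrib_left)
  also have "\<dots> \<le> (G + B)\<^sup>2 * (1 + ln (real L))"
    by (intro mult_left_mono harm_le_one_plus_ln) (auto simp: L_def)
  finally show ?thesis
    unfolding L_def .
qed

subsection \<open>Follow the leading history\<close>

definition flh_normalizer :: "real \<Rightarrow> (nat \<Rightarrow> nat \<Rightarrow> real) \<Rightarrow> (nat \<Rightarrow> real) \<Rightarrow> nat \<Rightarrow> real" where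
  "flh_normalizer \<zeta> E y t = (\<Sum>j = 1..t. flh_weights \<zeta> E y t j * exp (- \<zeta> * (y t - E j t)\<^sup>2))"

lemma flh_weights_Suc:
  assumes "t \<ge> 1"
  shows "flh_weights \<zeta> E y (Suc t) i =
           (if i = Suc t then 1 / real (Suc t)
            else if 1 \<le> i \<and> i \<le> t
              then (1 - 1 / real (Suc t)) *
                   (flh_weights \<zeta> E y t i * exp (- \<zeta> * (y t - E i t)\<^sup>2) / flh_normalizer \<zeta> E y t)
            else 0)"
  using assms by (cases t) (simp_all add: Let_def flh_normalizer_def)

lemma flh_weights_simplex:
  assumes "t \<ge> 1"
  shows "(\<forall>i \<in> {1..t}. flh_weights \<zeta> E y t i > 0) \<and> sum (flh_weights \<zeta> E y t) {1..t} = 1"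
  using assms
proof (induction t rule: dec_induct)
  case (step t)
  let ?w = "flh_weights \<zeta> E y t" and ?e = "\<lambda>i. exp (- \<zeta> * (y t - E i t)\<^sup>2)"
  have Z_pos: "flh_normalizer \<zeta> E y t > 0"
    unfolding flh_normalizer_def using step
    by (intro sum_pos2[where i=1]) (auto intro!: mult_nonneg_nonneg less_imp_le)
  moreover have "1 - 1 / real (Suc t) > 0"
    using step by (simp add: field_simps)
  ultimately have "\<forall>i \<in> {1..Suc t}. flh_weights \<zeta> E y (Suc t) i > 0"
    using step by (auto simp: flh_weights_Suc)
  moreover have "sum (flh_weights \<zeta> E y (Suc t)) {1..t}
      = (1 - 1 / real (Suc t)) * ((\<Sum>i = 1..t. ?w i * ?e i) / flh_normalizer \<zeta> E y t)"
    using step by (simp add: flh_weights_Suc sum_distrib_left sum_divide_distrib)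
  ultimately show ?case
    using step Z_pos by (simp add: flh_weights_Suc flh_normalizer_def)
qed simp

lemma flh_normalizer_pos: "t \<ge> 1 \<Longrightarrow> flh_normalizer \<zeta> E y t > 0"
  unfolding flh_normalizer_def using flh_weights_simplex[of t \<zeta> E y]
  by (intro sum_pos2[where i=1]) (auto intro!: mult_nonneg_nonneg less_imp_le)

lemma flh_weights_newest:
  assumes "t \<ge> 1"
  shows "flh_weights \<zeta> E y t t = 1 / real t"
proof (cases "t = 1")
  case False
  then obtain t' where "t = Suc t'" "t' \<ge> 1"
    using assms by (cases t) auto
  then show ?thesis
    by (simp add: flh_weights_Suc)
qed simp

lemma flh_weights_le_1:
  assumes "t \<ge> 1" "i \<in> {1..t}"
  shows "flh_weights \<zeta> E y (Suc t) i \<le> 1"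
proof -
  let ?w = "flh_weights \<zeta> E y t i * exp (- \<zeta> * (y t - E i t)\<^sup>2)"
  have nonneg: "\<And>j. j \<in> {1..t} \<Longrightarrow> 0 \<le> flh_weights \<zeta> E y t j * exp (- \<zeta> * (y t - E j t)\<^sup>2)"
    using flh_weights_simplex[OF assms(1), of \<zeta> E y] by (auto intro: less_imp_le)
  then have "0 \<le> ?w" "?w \<le> flh_normalizer \<zeta> E y t"
    unfolding flh_normalizer_def using assms by (auto intro: member_le_sum)
  then have "0 \<le> ?w / flh_normalizer \<zeta> E y t" "?w / flh_normalizer \<zeta> E y t \<le> 1"
    using flh_normalizer_pos[OF assms(1)] by auto
  then have "(1 - 1 / real (Suc t)) * (?w / flh_normalizer \<zeta> E y t) \<le> 1 * 1"
    by (intro mult_mono) auto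
  then show ?thesis
    using assms by (simp add: flh_weights_Suc)
qed

text \<open>Each round multiplies the weight of learner a by \<open>t/(t+1) \<cdot> exp (-\<zeta> (y t - E a t)\<^sup>2) / Z t\<close>;
  bounding the normalizer \<open>Z t\<close> by the same exponential at the prediction X turns the product of
  these factors into \<open>exp (\<zeta> \<cdot> regret)\<close>.\<close>

lemma flh_weight_lower_bound:
  assumes "a \<ge> 1" "a + k \<le> Suc T"
    and normalizer_le: "\<And>t. a \<le> t \<Longrightarrow> t \<le> T \<Longrightarrow> flh_normalizer \<zeta> E y t \<le> exp (- \<zeta> * (y t - X t)\<^sup>2)"
  shows "exp (\<zeta> * (\<Sum>t\<in>{a..<a + k}. (y t - X t)\<^sup>2 - (y t - E a t)\<^sup>2)) / real (a + k)
           \<le> flh_weights \<zeta> E y (a + k) a"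
  using assms(2)
proof (induction k)
  case 0
  then show ?case
    using \<open>a \<ge> 1\<close> by (simp add: flh_weights_newest)
next
  case (Suc k)
  define t where "t = a + k"
  have t: "t \<ge> 1" "a \<le> t" "t \<le> T"
    using \<open>a \<ge> 1\<close> Suc.prems unfolding t_def by auto
  define S where "S = (\<Sum>s\<in>{a..<t}. (y s - X s)\<^sup>2 - (y s - E a s)\<^sup>2)"
  define e where "e = exp (- \<zeta> * (y t - E a t)\<^sup>2)"
  define w where "w = flh_weights \<zeta> E y t a"
  define Z where "Z = flh_normalizer \<zeta> E y t"
  have IH: "exp (\<zeta> * S) / real t \<le> w"
    using Suc unfolding t_def S_def w_def by simp
  have "Z > 0"
    unfolding Z_def using flh_normalizer_pos[OF t(1)] .
  have "w \<ge> 0"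
    unfolding w_def using flh_weights_simplex[OF t(1), of \<zeta> E y] t \<open>a \<ge> 1\<close>
    by (auto intro!: less_imp_le)
  have "exp (\<zeta> * ((y t - X t)\<^sup>2 - (y t - E a t)\<^sup>2)) = e / exp (- \<zeta> * (y t - X t)\<^sup>2)"
    unfolding e_def by (simp add: exp_diff[symmetric] algebra_simps)
  also have "\<dots> \<le> e / Z"
    using normalizer_le[OF t(2,3)] \<open>Z > 0\<close> unfolding Z_def e_def by (intro divide_left_mono) auto
  finally have step: "exp (\<zeta> * ((y t - X t)\<^sup>2 - (y t - E a t)\<^sup>2)) \<le> e / Z" .
  have "exp (\<zeta> * (S + ((y t - X t)\<^sup>2 - (y t - E a t)\<^sup>2))) / real (Suc t)
        = (real t / real (Suc t)) * (exp (\<zeta> * S) / real t) * exp (\<zeta> * ((y t - X t)\<^sup>2 - (y t - E a t)\<^sup>2))"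
    using t by (simp add: distrib_left exp_add)
  also have "\<dots> \<le> (real t / real (Suc t)) * w * (e / Z)"
    using IH step \<open>w \<ge> 0\<close> by (intro mult_mono) auto
  also have "\<dots> = flh_weights \<zeta> E y (Suc t) a"
    using t \<open>a \<ge> 1\<close> unfolding w_def Z_def e_def by (simp add: flh_weights_Suc field_simps)
  finally show ?case
    unfolding t_def S_def using t by simp
qed

lemma flh_regret:
  assumes "\<zeta> > 0" "1 \<le> a" "a \<le> b"
    and "\<And>t. a \<le> t \<Longrightarrow> t \<le> b \<Longrightarrow> flh_normalizer \<zeta> E y t \<le> exp (- \<zeta> * (y t - X t)\<^sup>2)"
  shows "(\<Sum>t = a..b. (y t - X t)\<^sup>2 - (y t - E a t)\<^sup>2) \<le> ln (real (Suc b)) / \<zeta>"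
proof -
  define D where "D = (\<Sum>t = a..b. (y t - X t)\<^sup>2 - (y t - E a t)\<^sup>2)"
  have "a + (Suc b - a) = Suc b" "{a..<Suc b} = {a..b}"
    using assms by auto
  then have "exp (\<zeta> * D) / real (Suc b) \<le> flh_weights \<zeta> E y (Suc b) a"
    using flh_weight_lower_bound[of a "Suc b - a" b \<zeta> E y X] assms unfolding D_def by simp
  also have "\<dots> \<le> 1"
    using assms by (intro flh_weights_le_1) auto
  finally have "\<zeta> * D \<le> ln (real (Suc b))"
    by (simp add: ln_ge_iff field_simps)
  then show ?thesis
    unfolding D_def using \<open>\<zeta> > 0\<close> by (simp add: field_simps)
qed

lemma flh_normalizer_le_exp_sq_loss:
  assumes "t \<ge> 1" "\<zeta> \<ge> 0"
    and "\<And>x. x \<in> {-B..B} \<Longrightarrow> 2 * \<zeta> * (y t - x)\<^sup>2 \<le> 1"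
    and "\<And>j. j \<in> {1..t} \<Longrightarrow> E j t \<in> {-B..B}"
  shows "flh_normalizer \<zeta> E y t \<le> exp (- \<zeta> * (y t - (\<Sum>j = 1..t. flh_weights \<zeta> E y t j * E j t))\<^sup>2)"
  unfolding flh_normalizer_def using assms flh_weights_simplex[OF assms(1), of \<zeta> E y]
  by (intro sum_exp_sq_loss_le_exp_sq_loss_mix[where S = "{-B..B}"]) (auto intro: less_imp_le)

lemma flh_ogd_regret_vs_base_pred:
  assumes "- B \<le> c" "c \<le> B" "G + B > 0" "1 \<le> a" "a \<le> b"
    and y_bounded: "\<And>t. t \<in> {a..b} \<Longrightarrow> \<bar>y t\<bar> \<le> G"
  shows "(\<Sum>t = a..b. (y t - flh_ogd_pred B G c y t)\<^sup>2 - (y t - base_pred B c y a t)\<^sup>2)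
           \<le> 2 * (G + B)\<^sup>2 * ln (real (Suc b))"
proof -
  define \<zeta> :: real where "\<zeta> = 1 / (2 * (G + B)\<^sup>2)"
  define E where "E = base_pred B c y"
  have "\<zeta> > 0"
    unfolding \<zeta>_def using \<open>G + B > 0\<close> by simp
  have small_loss: "2 * \<zeta> * (y t - x)\<^sup>2 \<le> 1" if "t \<in> {a..b}" "x \<in> {-B..B}" for t x
  proof -
    have "(y t - x)\<^sup>2 \<le> (G + B)\<^sup>2"
      using y_bounded[OF that(1)] that(2) by (intro power2_le_iff_abs_le[THEN iffD2]) auto
    then show ?thesis
      unfolding \<zeta>_def using \<open>G + B > 0\<close> by simp
  qed
  have E_range: "E j t \<in> {-B..B}" for j t
    unfolding E_def base_pred_def using ogd_pred_range[OF assms(1,2)] by auto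
  have prediction: "flh_ogd_pred B G c y t = (\<Sum>j = 1..t. flh_weights \<zeta> E y t j * E j t)" for t
    unfolding flh_ogd_pred_def \<zeta>_def E_def by (simp add: Let_def)
  have "flh_normalizer \<zeta> E y t \<le> exp (- \<zeta> * (y t - flh_ogd_pred B G c y t)\<^sup>2)"
    if "a \<le> t" "t \<le> b" for t
    unfolding prediction using that assms(4) small_loss E_range \<open>\<zeta> > 0\<close>
    by (intro flh_normalizer_le_exp_sq_loss) auto
  then have "(\<Sum>t = a..b. (y t - flh_ogd_pred B G c y t)\<^sup>2 - (y t - E a t)\<^sup>2) \<le> ln (real (Suc b)) / \<zeta>"
    using assms(4,5) \<open>\<zeta> > 0\<close> by (intro flh_regret) auto
  then show ?thesis
    unfolding \<zeta>_def E_def by (simp add: mult_ac)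
qed

subsection \<open>The offline comparator on a plateau\<close>

lemma sum_sq_dev_eq_sum_sq_dev_mean:
  fixes y :: "'i \<Rightarrow> real" and A :: "'i set" and v :: real
  defines "m \<equiv> (\<Sum>j\<in>A. y j) / real (card A)"
  shows "(\<Sum>j\<in>A. (y j - v)\<^sup>2) = (\<Sum>j\<in>A. (y j - m)\<^sup>2) + (\<Sum>j\<in>A. v - y j)\<^sup>2 / real (card A)"
proof (cases "card A = 0")
  case False
  define Y where "Y = (\<Sum>j\<in>A. y j)"
  have expand: "(\<Sum>j\<in>A. (y j - w)\<^sup>2) = (\<Sum>j\<in>A. (y j)\<^sup>2) - 2 * w * Y + real (card A) * w\<^sup>2" for w
    unfolding Y_def power2_diff by (simp add: sum.distrib sum_subtractf sum_distrib_left sum_distrib_right mult_ac)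
  have deviation: "(\<Sum>j\<in>A. v - y j) = real (card A) * v - Y"
    unfolding Y_def by (simp add: sum_subtractf)
  show ?thesis
    unfolding expand deviation m_def Y_def[symmetric] using False by (simp add: field_simps power2_eq_square)
next
  case True
  then have "A = {} \<or> infinite A"
    by (simp add: card_eq_0_iff)
  then show ?thesis
    by auto
qed

lemma kkt_stationarity_interior:
  assumes "kkt n B C y u lam gm gp s" "t \<in> {1..n}" "- B < u t" "u t < B"
  shows "u t - y t = lam * (s t - s (t - 1))"
proof -
  have "gm t * (u t + B) = 0" "gp t * (u t - B) = 0"
      "u t - y t = lam * (s t - s (t - 1)) + gm t - gp t"
    using assms(1,2) unfolding kkt_def by auto
  then show ?thesis
    using assms(3,4) by simp
qed

lemma kkt_plateau_sum:
  assumes "kkt n B C y u lam gm gp s" "structure1 n B u a b \<or> structure2 n B u a b"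
  shows "(\<Sum>j = a..b. u j - y j)\<^sup>2 = 4 * lam\<^sup>2"
proof -
  have ab: "2 \<le> a" "a \<le> b" "b \<le> n - 1" and plateau: "\<forall>j \<in> {a..b}. u j = u a"
    and interior: "- B < u a" "u a < B"
    and jumps: "(u (b + 1) < u b \<and> u (a - 1) < u a) \<or> (u b < u (b + 1) \<and> u a < u (a - 1))"
    using assms(2) unfolding structure1_def structure2_def by blast+
  have sgn_s: "s t = sgn (u (t + 1) - u t)" if "t \<in> {1..<n}" "u (t + 1) \<noteq> u t" for t
    using assms(1) that unfolding kkt_def by blast
  have stationary: "u j - y j = lam * (s j - s (j - 1))" if "j \<in> {a..b}" for j
  proof -
    have "u j = u a"
      using plateau that by blast
    moreover have "j \<in> {1..n}"
      using that ab by auto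
    ultimately show ?thesis
      using kkt_stationarity_interior[OF assms(1), of j] interior by simp
  qed
  have "(\<Sum>j = a..b. u j - y j) = (\<Sum>j = a..b. lam * (s j - s (j - 1)))"
    using stationary by simp
  also have "\<dots> = lam * (\<Sum>j = a - 1..b - 1. s (Suc j) - s j)"
    unfolding sum_distrib_left[symmetric]
    using sum.shift_bounds_cl_Suc_ivl[of "\<lambda>j. s j - s (j - 1)" "a - 1" "b - 1"] ab by simp
  also have "\<dots> = lam * (s b - s (a - 1))"
    using ab by (simp add: sum_Suc_diff)
  finally have sum_eq: "(\<Sum>j = a..b. u j - y j) = lam * (s b - s (a - 1))" .
  have "b \<in> {1..<n}" "a - 1 \<in> {1..<n}" "a - 1 + 1 = a"
    using ab by auto
  then have "s b = sgn (u (b + 1) - u b)" "s (a - 1) = sgn (u a - u (a - 1))"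
    using jumps sgn_s[of b] sgn_s[of "a - 1"] by auto
  then have "(s b - s (a - 1))\<^sup>2 = 4"
    using jumps by auto
  then show ?thesis
    unfolding sum_eq power_mult_distrib by simp
qed

lemma plateau_comparator_loss:
  assumes "kkt n B C y u lam gm gp s" "structure1 n B u a b \<or> structure2 n B u a b"
  defines "m \<equiv> (\<Sum>j = a..b. y j) / real (b - a + 1)"
  shows "(\<Sum>j = a..b. (y j - u j)\<^sup>2) = (\<Sum>j = a..b. (y j - m)\<^sup>2) + 4 * lam\<^sup>2 / real (b - a + 1)"
proof -
  have "a \<le> b"
    using assms(2) unfolding structure1_def structure2_def by blast
  define v where "v = u a"
  have plateau: "u j = v" if "j \<in> {a..b}" for j
    using assms(2) that unfolding v_def structure1_def structure2_def by blast
  show ?thesis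
    using sum_sq_dev_eq_sum_sq_dev_mean[where y = y and A = "{a..b}" and v = v]
      kkt_plateau_sum[OF assms(1,2)] \<open>a \<le> b\<close> plateau
    by (simp add: m_def Suc_diff_le)
qed

theorem lemma5:
  fixes n a b :: nat and B G C c lam :: real
    and y u gm gp s :: "nat \<Rightarrow> real"
  assumes "n \<ge> 3" and "B \<ge> 1" and "G \<ge> B"
    and "\<forall>t \<in> {1..n}. - G \<le> y t \<and> y t \<le> G"
    and "- B \<le> c" and "c \<le> B"
    and "C > 0"
    and "offline_optimal n B C y u"
    and "kkt n B C y u lam gm gp s"
    and "structure1 n B u a b \<or> structure2 n B u a b"
    and "- B \<le> (\<Sum>j = a..b. y j) / real (b - a + 1)"
    and "(\<Sum>j = a..b. y j) / real (b - a + 1) \<le> B"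
  shows "(\<Sum>j = a..b. (y j - flh_ogd_pred B G c y j)\<^sup>2 - (y j - u j)\<^sup>2)
           \<le> 10 * (B + G)\<^sup>2 * ln (real n) - 4 * lam\<^sup>2 / real (b - a + 1)"
proof -
  define m where "m = (\<Sum>j = a..b. y j) / real (b - a + 1)"
  define K where "K = (G + B)\<^sup>2"
  have "2 \<le> a" "a \<le> b" "b \<le> n - 1"
    using assms(10) unfolding structure1_def structure2_def by blast+
  then have ab: "1 \<le> a" "a \<le> b" "b + 1 \<le> n"
    using assms(1) by auto
  have y_bounded: "\<bar>y t\<bar> \<le> G" if "t \<in> {a..b}" for t
  proof -
    have "t \<in> {1..n}"
      using that ab by auto
    then show ?thesis
      using assms(4) by fastforce
  qed
  have ln_le: "ln (real (Suc b)) \<le> ln (real n)" "ln (real (b - a + 1)) \<le> ln (real n)"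
    using ab by auto
  have "(\<Sum>t = a..b. (y t - flh_ogd_pred B G c y t)\<^sup>2 - (y t - base_pred B c y a t)\<^sup>2)
      \<le> 2 * K * ln (real (Suc b))"
    unfolding K_def using assms(2,3) ab y_bounded by (intro flh_ogd_regret_vs_base_pred[OF assms(5,6)]) auto
  also have "\<dots> \<le> 2 * K * ln (real n)"
    using ln_le by (intro mult_left_mono) (auto simp: K_def)
  finally have flh: "(\<Sum>t = a..b. (y t - flh_ogd_pred B G c y t)\<^sup>2 - (y t - base_pred B c y a t)\<^sup>2)
      \<le> 2 * K * ln (real n)" .
  have "(\<Sum>t = a..b. (y t - base_pred B c y a t)\<^sup>2 - (y t - m)\<^sup>2) \<le> K * (1 + ln (real (b - a + 1)))"
    unfolding K_def m_def using assms(11,12) ab y_bounded by (intro base_pred_regret[OF assms(5,6)]) auto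
  also have "\<dots> \<le> K * (1 + ln (real n))"
    using ln_le by (intro mult_left_mono) (auto simp: K_def)
  finally have ogd: "(\<Sum>t = a..b. (y t - base_pred B c y a t)\<^sup>2 - (y t - m)\<^sup>2) \<le> K + K * ln (real n)"
    by (simp add: distrib_left)
  have "K * 1 \<le> K * ln (real n)"
    unfolding K_def using exp_le assms(1) by (intro mult_left_mono) (auto simp: ln_ge_iff)
  moreover have "(B + G)\<^sup>2 = K" "0 \<le> K"
    unfolding K_def by (simp_all add: add.commute)
  ultimately show ?thesis
    using flh ogd unfolding sum_subtractf plateau_comparator_loss[OF assms(9,10)] m_def[symmetric]
    by simp
qed

end
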